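(* Let $B$ be a brace such that $B=\operatorname{Soc}_n(B)$ for some $n\in\mathbb{N}$. If the group $(B,\cdot)$ is supersoluble, then $B$ is supersoluble.
   Context: A brace (skew left brace) is a set $B$ with two binary operations $+$ and $\cdot$ such that $(B,+)$ and $(B,\cdot)$ are groups and $a(b+c)=ab-a+ac$ for all $a,b,c\in B$. $\lambda_a(b)=-a+ab$ defines a homomorphism $\lambda\colon(B,\cdot)\to\operatorname{Aut}(B,+)$. An ideal is a subset that is a subgroup of both groups, normal in both, and invariant under all $\lambda_b$; quotients by ideals are braces. $\operatorname{Soc}(B)=\operatorname{Ker}\lambda\cap Z(B,+)$; $\operatorname{Soc}_0(B)=\{0\}$, $\operatorname{Soc}_{k+1}(B)/\operatorname{Soc}_k(B)=\operatorname{Soc}(B/\operatorname{Soc}_k(B))$. A brace $B$ is supersoluble if there is a finite chain of ideals $\{0\}=I_0\le\dots\le I_m=B$ such that for each $i$, either $(I_{i+1}/I_i,+)$ is infinite cyclic and $I_{i+1}/I_i\le\operatorname{Soc}(B/I_i)$, or $I_{i+1}/I_i$ has prime order. A group is supersoluble in the usual sense (finite normal series with cyclic factors). *)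

theory Defs
  imports "HOL-Algebra.Algebra" "HOL-Computational_Algebra.Primes"
begin

text \<open>A (skew left) brace is given by two HOL-Algebra group structures A (the additive
  group, whose operation is written with the multiplication symbol of HOL-Algebra)
  and M (the multiplicative group) on the same carrier, satisfying
  a(b+c) = ab - a + ac.\<close>

definition brace :: "('a, 'b) monoid_scheme \<Rightarrow> ('a, 'c) monoid_scheme \<Rightarrow> bool" where
  "brace A M \<longleftrightarrow> group A \<and> group M \<and> carrier A = carrier M \<and>
     (\<forall>a\<in>carrier A. \<forall>b\<in>carrier A. \<forall>c\<in>carrier A.
        a \<otimes>\<^bsub>M\<^esub> (b \<otimes>\<^bsub>A\<^esub> c)
        = (a \<otimes>\<^bsub>M\<^esub> b) \<otimes>\<^bsub>A\<^esub> inv\<^bsub>A\<^esub> a \<otimes>\<^bsub>A\<^esub> (a \<otimes>\<^bsub>M\<^esub> c))"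

definition brace_lambda :: "('a, 'b) monoid_scheme \<Rightarrow> ('a, 'c) monoid_scheme \<Rightarrow> 'a \<Rightarrow> 'a \<Rightarrow> 'a" where
  "brace_lambda A M a b = inv\<^bsub>A\<^esub> a \<otimes>\<^bsub>A\<^esub> (a \<otimes>\<^bsub>M\<^esub> b)"

definition group_center :: "('a, 'b) monoid_scheme \<Rightarrow> 'a set" where
  "group_center G = {z \<in> carrier G. \<forall>g\<in>carrier G. z \<otimes>\<^bsub>G\<^esub> g = g \<otimes>\<^bsub>G\<^esub> z}"

definition brace_ideal :: "('a, 'b) monoid_scheme \<Rightarrow> ('a, 'c) monoid_scheme \<Rightarrow> 'a set \<Rightarrow> bool" where
  "brace_ideal A M I \<longleftrightarrow> subgroup I A \<and> subgroup I M \<and> I \<lhd> A \<and> I \<lhd> M \<and>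
     (\<forall>b\<in>carrier A. brace_lambda A M b ` I \<subseteq> I)"

definition brace_socle :: "('a, 'b) monoid_scheme \<Rightarrow> ('a, 'c) monoid_scheme \<Rightarrow> 'a set" where
  "brace_socle A M =
     {a \<in> carrier A. \<forall>x\<in>carrier A. brace_lambda A M a x = x} \<inter> group_center A"

text \<open>Socle series: Soc_0 = 0, and Soc_(k+1) is the preimage of Soc(B/Soc_k) under the
  canonical projection B \<rightarrow> B/Soc_k. The quotient brace B/I is (A Mod I, M Mod I);
  its elements are the cosets of I, so the preimage is the union of these cosets.\<close>
primrec soc_series :: "('a, 'b) monoid_scheme \<Rightarrow> ('a, 'c) monoid_scheme \<Rightarrow> nat \<Rightarrow> 'a set" where
  "soc_series A M 0 = {\<one>\<^bsub>A\<^esub>}"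
| "soc_series A M (Suc k) =
     \<Union> (brace_socle (A Mod (soc_series A M k)) (M Mod (soc_series A M k)))"

definition supersoluble_brace :: "('a, 'b) monoid_scheme \<Rightarrow> ('a, 'c) monoid_scheme \<Rightarrow> bool" where
  "supersoluble_brace A M \<longleftrightarrow>
     (\<exists>(I :: nat \<Rightarrow> 'a set) (m::nat).
        I 0 = {\<one>\<^bsub>A\<^esub>} \<and> I m = carrier A \<and>
        (\<forall>i\<le>m. brace_ideal A M (I i)) \<and>
        (\<forall>i<m. I i \<subseteq> I (Suc i)) \<and>
        (\<forall>i<m.
           (infinite (carrier ((A\<lparr>carrier := I (Suc i)\<rparr>) Mod (I i))) \<and>
            cyclic_group ((A\<lparr>carrier := I (Suc i)\<rparr>) Mod (I i)) \<and>
            carrier ((A\<lparr>carrier := I (Suc i)\<rparr>) Mod (I i))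
              \<subseteq> brace_socle (A Mod (I i)) (M Mod (I i)))
           \<or> Factorial_Ring.prime (card (carrier ((A\<lparr>carrier := I (Suc i)\<rparr>) Mod (I i))))))"

definition supersoluble_group :: "('a, 'b) monoid_scheme \<Rightarrow> bool" where
  "supersoluble_group G \<longleftrightarrow>
     (\<exists>(N :: nat \<Rightarrow> 'a set) (m::nat).
        N 0 = {\<one>\<^bsub>G\<^esub>} \<and> N m = carrier G \<and>
        (\<forall>i\<le>m. N i \<lhd> G) \<and>
        (\<forall>i<m. N i \<subseteq> N (Suc i)) \<and>
        (\<forall>i<m. cyclic_group ((G\<lparr>carrier := N (Suc i)\<rparr>) Mod (N i))))"

end

theory Submission
  imports Defs
begin

text \<open>
  Let \<open>S \<subseteq> T\<close> be consecutive terms of the socle series. Modulo \<open>S\<close>, every element \<open>x\<close> of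
  \<open>T\<close> is additively central and acts trivially, so \<open>x y \<equiv> x + y\<close>. Consequently every normal
  subgroup of \<open>(B,\<cdot>)\<close> between \<open>S\<close> and \<open>T\<close> is an ideal, and for two such subgroups \<open>U \<subseteq> V\<close>
  the additive and the multiplicative factor \<open>V/U\<close> coincide and lie in \<open>Soc(B/U)\<close>. It
  therefore suffices to refine \<open>S \<subseteq> T\<close> by normal subgroups of the supersoluble group
  \<open>(B,\<cdot>)\<close> whose factors are infinite cyclic or of prime order. Intersecting a cyclic normal
  series \<open>N\<^sub>i\<close> of \<open>(B,\<cdot>)\<close> with \<open>T\<close> and multiplying by \<open>S\<close> gives cyclic factors, and a
  finite cyclic factor \<open>Q/P\<close> of composite order \<open>d e\<close> splits at \<open>{x \<in> Q. x\<^sup>e \<in> P}\<close>,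
  which is normal in the whole group.
\<close>

lemma rtranclp_map:
  assumes "\<And>x y. R x y \<Longrightarrow> S (f x) (f y)" "R\<^sup>*\<^sup>* a b"
  shows "S\<^sup>*\<^sup>* (f a) (f b)"
  using assms(2) by induction (auto intro: rtranclp.rtrancl_into_rtrancl assms(1))

lemma rtranclp_increasing_within:
  fixes R :: "'a::order \<Rightarrow> 'a \<Rightarrow> bool"
  assumes mono: "\<And>U V. R U V \<Longrightarrow> U \<le> V" and "R\<^sup>*\<^sup>* S T"
  shows "(\<lambda>U V. R U V \<and> S \<le> U \<and> V \<le> T)\<^sup>*\<^sup>* S T"
proof -
  let ?R = "\<lambda>B U V. R U V \<and> S \<le> U \<and> V \<le> B"
  have widen: "?R B \<le> ?R C" if "B \<le> C" for B C
    by (intro predicate2I) (use order.trans[OF _ that] in blast)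
  from assms(2) have "(?R T)\<^sup>*\<^sup>* S T \<and> S \<le> T"
  proof (induction rule: rtranclp_induct)
    case (step Y Z)
    have "Y \<le> Z" using mono[OF step.hyps(2)] .
    have "(?R Z)\<^sup>*\<^sup>* S Y"
      by (rule rtranclp_mono[OF widen[OF \<open>Y \<le> Z\<close>], THEN predicate2D, OF conjunct1[OF step.IH]])
    moreover have "?R Z Y Z" using step.hyps(2) step.IH by simp
    ultimately show ?case
      using order.trans[OF conjunct2[OF step.IH] \<open>Y \<le> Z\<close>]
      by (blast intro: rtranclp.rtrancl_into_rtrancl)
  qed simp
  then show ?thesis ..
qed

section \<open>Normal series of supersoluble groups\<close>

lemma (in group) rcos_eq_iff:
  assumes "subgroup H G" "x \<in> carrier G" "y \<in> carrier G"
  shows "H #> x = H #> y \<longleftrightarrow> x \<otimes> inv y \<in> H"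
  using assms repr_independence repr_independenceD subgroup.rcos_module[OF _ is_group]
  by metis

lemma (in group) subset_set_mult_one:
  assumes "H \<subseteq> carrier G" "\<one> \<in> K"
  shows "H \<subseteq> H <#> K" and "H \<subseteq> K <#> H"
  using assms by (force simp: set_mult_def)+

lemma (in group) subgroup_set_mult_absorb:
  assumes "subgroup H G" "K \<subseteq> H" "\<one> \<in> K"
  shows "H <#> K = H"
  using subgroup_mult_id[OF assms(1)] mono_set_mult[OF subset_refl assms(2)]
    subset_set_mult_one(1)[OF subgroup.subset[OF assms(1)] assms(3)] by blast

lemma (in group) subgroup_nat_pow_closed:
  "subgroup H G \<Longrightarrow> x \<in> H \<Longrightarrow> x [^] (n::nat) \<in> H"
  using subgroup_int_pow_closed[of H x "int n"] by (simp add: int_pow_int)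

lemma (in group) subquotient_group:
  assumes "N \<lhd> G" "subgroup H G" "N \<subseteq> H"
  shows "group (G\<lparr>carrier := H\<rparr> Mod N)"
  using normal.factorgroup_is_group[OF normal_restrict_supergroup[OF assms(2,1,3)]] .

lemma carrier_subquotient: "carrier (G\<lparr>carrier := H\<rparr> Mod N) = (\<lambda>x. N #>\<^bsub>G\<^esub> x) ` H"
  unfolding carrier_FactGroup by simp

lemma (in group) subquotient_pow:
  assumes "N \<lhd> G" "subgroup H G" "N \<subseteq> H" "a \<in> H"
  shows "(N #> a) [^]\<^bsub>G\<lparr>carrier := H\<rparr> Mod N\<^esub> (k::nat) = N #> (a [^] k)"
    and "(N #> a) [^]\<^bsub>G\<lparr>carrier := H\<rparr> Mod N\<^esub> (i::int) = N #> (a [^] i)"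
proof -
  interpret N: normal N "G\<lparr>carrier := H\<rparr>"
    using normal_restrict_supergroup[OF assms(2,1,3)] .
  show "(N #> a) [^]\<^bsub>G\<lparr>carrier := H\<rparr> Mod N\<^esub> k = N #> (a [^] k)"
    using N.FactGroup_pow[of a k] assms(4) by (simp add: nat_pow_consistent[symmetric])
  show "(N #> a) [^]\<^bsub>G\<lparr>carrier := H\<rparr> Mod N\<^esub> i = N #> (a [^] i)"
    using N.FactGroup_int_pow[of a i] assms int_pow_consistent[OF assms(2,4)] by simp
qed

lemma (in group) nat_abs_pow_mem:
  assumes "subgroup U G" "g \<in> carrier G" "g [^] (j::int) \<in> U"
  shows "g [^] nat \<bar>j\<bar> \<in> U"
proof (cases "j \<ge> 0")
  case True
  then have "g [^] nat \<bar>j\<bar> = g [^] j" by (metis int_pow_int abs_of_nonneg int_nat_eq)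
  then show ?thesis using assms(3) by simp
next
  case False
  then have "g [^] nat \<bar>j\<bar> = inv (g [^] j)"
    using int_pow_neg[OF assms(2), of j] by (metis int_pow_int abs_of_neg not_le int_nat_eq abs_ge_zero)
  then show ?thesis using subgroup.m_inv_closed[OF assms(1,3)] by simp
qed

lemma (in group) subgroup_generated_by_least_power:
  fixes d :: nat
  assumes g: "g \<in> carrier G" and gen: "carrier G = range (\<lambda>k::int. g [^] k)"
    and U: "subgroup U G" and d: "0 < d" "g [^] d \<in> U"
    and least: "\<And>n. 0 < n \<Longrightarrow> n < d \<Longrightarrow> g [^] n \<notin> U"
  shows "U = range (\<lambda>k::int. (g [^] d) [^] k)"
proof
  show "range (\<lambda>k::int. (g [^] d) [^] k) \<subseteq> U"
    using subgroup_int_pow_closed[OF U d(2)] by auto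
  show "U \<subseteq> range (\<lambda>k::int. (g [^] d) [^] k)"
  proof
    fix z assume z: "z \<in> U"
    then obtain j :: int where j: "z = g [^] j"
      using gen subgroup.subset[OF U] by blast
    have split: "g [^] j = (g [^] d) [^] (j div int d) \<otimes> g [^] (j mod int d)"
      using int_pow_mult[OF g, of "int d * (j div int d)" "j mod int d"]
        int_pow_pow[OF g, of "int d" "j div int d"] by (simp add: int_pow_int)
    then have "g [^] (j mod int d) = inv ((g [^] d) [^] (j div int d)) \<otimes> z"
      using j g by (simp add: m_assoc[symmetric])
    then have "g [^] (j mod int d) \<in> U"
      using z d(2) subgroup_int_pow_closed[OF U] subgroup.m_inv_closed[OF U]
        subgroup.m_closed[OF U] by simp
    then have "g [^] nat (j mod int d) \<in> U"
      using d(1) by (metis int_pow_int int_nat_eq of_nat_0_less_iff pos_mod_sign)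
    moreover have "nat (j mod int d) < d"
      using d(1) by (simp add: nat_less_iff)
    ultimately have "nat (j mod int d) = 0"
      using least neq0_conv by meson
    then have "j mod int d = 0"
      using d(1) by (simp add: nat_eq_iff)
    then have "z = (g [^] d) [^] (j div int d)"
      using split j g by simp
    then show "z \<in> range (\<lambda>k::int. (g [^] d) [^] k)"
      by blast
  qed
qed

lemma (in group) subgroup_of_cyclic_is_cyclic:
  assumes g: "g \<in> carrier G" and gen: "carrier G = range (\<lambda>k::int. g [^] k)"
    and U: "subgroup U G"
  shows "\<exists>u\<in>U. U = range (\<lambda>k::int. u [^] k)"
proof (cases "\<exists>n::nat. 0 < n \<and> g [^] n \<in> U")
  case True
  define d where "d = (LEAST n::nat. 0 < n \<and> g [^] n \<in> U)"
  have d: "0 < d" "g [^] d \<in> U"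
    using LeastI_ex[OF True] unfolding d_def by auto
  have "g [^] n \<notin> U" if "0 < n" "n < d" for n
    using not_less_Least[of n] that unfolding d_def by blast
  then show ?thesis
    using subgroup_generated_by_least_power[OF g gen U d] d(2) by blast
next
  case False
  have "U \<subseteq> {\<one>}"
  proof
    fix z assume z: "z \<in> U"
    then obtain j :: int where j: "z = g [^] j"
      using gen subgroup.subset[OF U] by blast
    then have "g [^] nat \<bar>j\<bar> \<in> U"
      using nat_abs_pow_mem[OF U g] z by blast
    then have "nat \<bar>j\<bar> = 0"
      using False neq0_conv by meson
    then show "z \<in> {\<one>}" using j by simp
  qed
  then show ?thesis using subgroup.one_closed[OF U] by (intro bexI[of _ \<one>]) auto
qed

lemma (in group) cyclic_subquotient_generator:
  assumes N: "N \<lhd> G" "subgroup V G" "N \<subseteq> V"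
    and cyclic: "cyclic_group (G\<lparr>carrier := V\<rparr> Mod N)"
    and W: "subgroup W G" "W \<subseteq> V"
  obtains w0 where "w0 \<in> W" "\<And>w. w \<in> W \<Longrightarrow> \<exists>i::int. N #> w = N #> (w0 [^] i)"
proof -
  let ?C = "G\<lparr>carrier := V\<rparr> Mod N"
  interpret C: group ?C using subquotient_group[OF N] .
  interpret NV: normal N "G\<lparr>carrier := V\<rparr>" using normal_restrict_supergroup[OF N(2,1,3)] .
  have "\<exists>c\<in>carrier ?C. carrier ?C = range (\<lambda>k::int. c [^]\<^bsub>?C\<^esub> k)"
    using cyclic by (simp only: C.cyclic_group)
  then obtain c where c: "c \<in> carrier ?C" "carrier ?C = range (\<lambda>k::int. c [^]\<^bsub>?C\<^esub> k)"
    by blast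
  have "group_hom (G\<lparr>carrier := V\<rparr>) ?C (\<lambda>x. N #> x)"
    unfolding group_hom_def group_hom_axioms_def
    using NV.r_coset_hom_Mod C.is_group NV.is_group by simp
  then have "subgroup ((\<lambda>x. N #> x) ` W) ?C"
    by (rule group_hom.subgroup_img_is_subgroup[OF _ subgroup_incl[OF W(1) N(2) W(2)]])
  then obtain u where u: "u \<in> (\<lambda>x. N #> x) ` W"
    and gen: "(\<lambda>x. N #> x) ` W = range (\<lambda>k::int. u [^]\<^bsub>?C\<^esub> k)"
    using C.subgroup_of_cyclic_is_cyclic[OF c] by meson
  then obtain w0 where w0: "w0 \<in> W" "u = N #> w0" by blast
  have "\<exists>i::int. N #> w = N #> (w0 [^] i)" if "w \<in> W" for w
  proof -
    have "N #> w \<in> range (\<lambda>k::int. (N #> w0) [^]\<^bsub>?C\<^esub> k)"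
      using imageI[of w W "\<lambda>x. N #> x", OF that] unfolding gen w0(2) .
    then obtain i :: int where "N #> w = (N #> w0) [^]\<^bsub>?C\<^esub> i" by (rule rangeE)
    then have "N #> w = N #> (w0 [^] i)"
      using subquotient_pow(2)[OF N w0(1)[THEN subsetD[OF W(2)]]] by simp
    then show ?thesis ..
  qed
  then show thesis by (rule that[OF w0(1)])
qed

text \<open>\<open>H/K\<close> is a quotient of the subgroup \<open>W N/N\<close> of the cyclic group \<open>V/N\<close>.\<close>

lemma (in group) cyclic_subquotient:
  assumes N: "N \<lhd> G" "subgroup V G" "N \<subseteq> V"
    and cyclic: "cyclic_group (G\<lparr>carrier := V\<rparr> Mod N)"
    and K: "K \<lhd> G" "subgroup H G" "K \<subseteq> H"
    and W: "subgroup W G" "W \<subseteq> V" "W \<subseteq> H" "W \<inter> N \<subseteq> K"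
    and cover: "H \<subseteq> W <#> K"
  shows "cyclic_group (G\<lparr>carrier := H\<rparr> Mod K)"
proof -
  let ?Q = "G\<lparr>carrier := H\<rparr> Mod K"
  interpret Q: group ?Q using subquotient_group[OF K] .
  have sK: "subgroup K G" and sN: "subgroup N G"
    using normal_imp_subgroup K(1) N(1) by blast+
  obtain w0 where w0: "w0 \<in> W" and gen: "\<And>w. w \<in> W \<Longrightarrow> \<exists>i::int. N #> w = N #> (w0 [^] i)"
    using cyclic_subquotient_generator[OF N cyclic W(1,2)] by blast
  have w0c: "w0 \<in> carrier G" using w0 subgroup.subset[OF W(1)] by blast
  have "carrier ?Q \<subseteq> range (\<lambda>k::int. (K #> w0) [^]\<^bsub>?Q\<^esub> k)"
  proof
    fix Y assume "Y \<in> carrier ?Q"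
    then obtain x where x: "x \<in> H" "Y = K #> x" unfolding carrier_subquotient by blast
    then obtain w k where wk: "w \<in> W" "k \<in> K" "x = w \<otimes> k"
      using cover unfolding set_mult_def by blast
    have wkc: "w \<in> carrier G" "k \<in> carrier G"
      using wk subgroup.subset[OF W(1)] subgroup.subset[OF sK] by auto
    have "w \<otimes> k \<otimes> inv w \<in> K"
      using K(1) wk(2) wkc(1) by (auto simp: normal_inv_iff)
    then have Y: "Y = K #> w"
      using x(2) wk(3) rcos_eq_iff[OF sK m_closed[OF wkc] wkc(1)] by simp
    obtain i :: int where "N #> w = N #> (w0 [^] i)" using gen wk(1) by blast
    moreover have pW: "w0 [^] i \<in> W" using subgroup_int_pow_closed[OF W(1) w0] .
    moreover have pc: "w0 [^] i \<in> carrier G" using int_pow_closed[OF w0c] .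
    ultimately have "w \<otimes> inv (w0 [^] i) \<in> N \<inter> W"
      using rcos_eq_iff[OF sN wkc(1) pc]
        subgroup.m_closed[OF W(1) wk(1) subgroup.m_inv_closed[OF W(1) pW]] by simp
    then have "K #> w = K #> (w0 [^] i)"
      using W(4) rcos_eq_iff[OF sK wkc(1) pc] by blast
    also have "\<dots> = (K #> w0) [^]\<^bsub>?Q\<^esub> i"
      using subquotient_pow(2)[OF K w0[THEN subsetD[OF W(3)]]] by simp
    finally show "Y \<in> range (\<lambda>k::int. (K #> w0) [^]\<^bsub>?Q\<^esub> k)"
      using Y by blast
  qed
  moreover have gen_in: "K #> w0 \<in> carrier ?Q"
    using w0 W(3) unfolding carrier_subquotient by blast
  moreover have "range (\<lambda>k::int. (K #> w0) [^]\<^bsub>?Q\<^esub> k) \<subseteq> carrier ?Q"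
    using Q.int_pow_closed[OF gen_in] by blast
  ultimately show ?thesis
    unfolding Q.cyclic_group by (meson subset_antisym)
qed

lemma (in group) card_subquotient_less_bottom:
  assumes P: "subgroup P G" "P \<subseteq> L" and L: "subgroup L G" "L \<subseteq> Q" "L \<noteq> Q"
    and Q: "Q \<subseteq> carrier G" and fin: "finite (carrier (G\<lparr>carrier := Q\<rparr> Mod P))"
  shows "card (carrier (G\<lparr>carrier := L\<rparr> Mod P)) < card (carrier (G\<lparr>carrier := Q\<rparr> Mod P))"
  unfolding carrier_subquotient
proof (rule psubset_card_mono)
  show "finite ((\<lambda>x. P #> x) ` Q)" using fin unfolding carrier_subquotient .
  obtain q where q: "q \<in> Q" "q \<notin> L" using L by blast
  have "P #> q \<notin> (\<lambda>x. P #> x) ` L"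
  proof
    assume "P #> q \<in> (\<lambda>x. P #> x) ` L"
    then obtain l where l: "l \<in> L" "P #> q = P #> l" by blast
    have lc: "l \<in> carrier G" using l(1) subgroup.subset[OF L(1)] by blast
    have "q \<otimes> inv l \<in> L" using l rcos_eq_iff[OF P(1)] q(1) Q lc P(2) by blast
    then have "q \<otimes> inv l \<otimes> l \<in> L" using l(1) subgroup.m_closed[OF L(1)] by blast
    then show False using q Q lc by (simp add: m_assoc subsetD)
  qed
  then show "(\<lambda>x. P #> x) ` L \<subset> (\<lambda>x. P #> x) ` Q" using q(1) L(2) by blast
qed

lemma (in group) set_mult_rcos_absorb:
  assumes "subgroup P G" "subgroup L G" "P \<subseteq> L" "x \<in> carrier G"
  shows "L <#> (P #> x) = L #> x"
  using setmult_rcos_assoc[of L P x] subgroup.subset[OF assms(1)] subgroup.subset[OF assms(2)]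
    subgroup_set_mult_absorb[OF assms(2,3) subgroup.one_closed[OF assms(1)]] assms(4)
  by simp

lemma (in group) carrier_subquotient_coarsen:
  assumes "subgroup P G" "subgroup L G" "P \<subseteq> L" "Q \<subseteq> carrier G"
  shows "carrier (G\<lparr>carrier := Q\<rparr> Mod L) = (\<lambda>Y. L <#> Y) ` carrier (G\<lparr>carrier := Q\<rparr> Mod P)"
  unfolding carrier_subquotient image_image
  using set_mult_rcos_absorb[OF assms(1-3)] assms(4) by (auto simp: image_def)

lemma (in group) card_subquotient_less_top:
  assumes P: "subgroup P G" "P \<subseteq> L" "P \<noteq> L" and L: "subgroup L G" "L \<subseteq> Q"
    and Q: "Q \<subseteq> carrier G" and fin: "finite (carrier (G\<lparr>carrier := Q\<rparr> Mod P))"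
  shows "card (carrier (G\<lparr>carrier := Q\<rparr> Mod L)) < card (carrier (G\<lparr>carrier := Q\<rparr> Mod P))"
proof -
  let ?F = "G\<lparr>carrier := Q\<rparr> Mod P"
  obtain l where l: "l \<in> L" "l \<notin> P" using P by blast
  have lc: "l \<in> carrier G" using l(1) subgroup.subset[OF L(1)] by blast
  have one_Q: "\<one> \<in> Q" using subgroup.one_closed[OF L(1)] L(2) by blast
  have "P #> l \<noteq> P #> \<one>" using l(2) rcos_eq_iff[OF P(1) lc one_closed] lc by simp
  moreover have "P #> l \<in> carrier ?F" "P #> \<one> \<in> carrier ?F"
    using l(1) L(2) one_Q unfolding carrier_subquotient by blast+
  moreover have "L <#> (P #> l) = L <#> (P #> \<one>)"
    using set_mult_rcos_absorb[OF P(1) L(1) P(2)] coset_join2[OF lc L(1) l(1)]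
      subgroup.subset[OF L(1)] lc by simp
  ultimately have "\<not> inj_on (\<lambda>Y. L <#> Y) (carrier ?F)"
    unfolding inj_on_def by blast
  then show ?thesis
    unfolding carrier_subquotient_coarsen[OF P(1) L(1) P(2) Q]
    using fin card_image_le inj_on_iff_eq_card le_neq_implies_less by metis
qed

lemma (in group) conj_nat_pow:
  assumes "b \<in> carrier G" "x \<in> carrier G"
  shows "(b \<otimes> x \<otimes> inv b) [^] (n::nat) = b \<otimes> x [^] n \<otimes> inv b"
proof (induction n)
  case (Suc n)
  have "(b \<otimes> x [^] n \<otimes> inv b) \<otimes> (b \<otimes> x \<otimes> inv b) = b \<otimes> (x [^] n \<otimes> x) \<otimes> inv b"
    using assms by (simp add: m_assoc inv_solve_left')
  then show ?case using Suc by simp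
qed (use assms in simp)

lemma (in group) subquotient_pow_eq_one_iff:
  assumes "P \<lhd> G" "subgroup Q G" "P \<subseteq> Q" "x \<in> Q"
  shows "(P #> x) [^]\<^bsub>G\<lparr>carrier := Q\<rparr> Mod P\<^esub> (m::nat) = \<one>\<^bsub>G\<lparr>carrier := Q\<rparr> Mod P\<^esub> \<longleftrightarrow>
    x [^] m \<in> P"
  using subquotient_pow(1)[OF assms] assms(4) subgroup.subset[OF assms(2)]
    rcos_eq_iff[OF normal_imp_subgroup[OF assms(1)] _ one_closed, of "x [^] m"]
    subgroup.subset[OF normal_imp_subgroup[OF assms(1)]]
  by auto

text \<open>Being defined by a power condition, this preimage of a subgroup of \<open>Q/P\<close> is normal in
  \<open>G\<close> and not only in \<open>Q\<close>.\<close>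

lemma (in group) normal_power_preimage:
  assumes P: "P \<lhd> G" and Q: "Q \<lhd> G" "P \<subseteq> Q"
    and comm: "comm_group (G\<lparr>carrier := Q\<rparr> Mod P)"
  shows "{x \<in> Q. x [^] (e::nat) \<in> P} \<lhd> G"
proof -
  let ?F = "G\<lparr>carrier := Q\<rparr> Mod P" and ?L = "{x \<in> Q. x [^] e \<in> P}"
  interpret F: comm_group ?F using comm .
  have sP: "subgroup P G" and sQ: "subgroup Q G" using P Q normal_imp_subgroup by blast+
  have Qc: "Q \<subseteq> carrier G" using subgroup.subset[OF sQ] .
  note pow_iff = subquotient_pow_eq_one_iff[OF P sQ Q(2)]
  have sL: "subgroup ?L G"
  proof (rule subgroupI)
    show "?L \<subseteq> carrier G" using Qc by blast
    show "?L \<noteq> {}" using subgroup.one_closed[OF sQ] subgroup.one_closed[OF sP] by auto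
  next
    fix x assume "x \<in> ?L"
    then show "inv x \<in> ?L"
      using subgroup.m_inv_closed[OF sQ] subgroup.m_inv_closed[OF sP] nat_pow_inv Qc by auto
  next
    fix x y assume xy: "x \<in> ?L" "y \<in> ?L"
    then have xy_F: "P #> x \<in> carrier ?F" "P #> y \<in> carrier ?F"
      unfolding carrier_subquotient by auto
    have "P #> (x \<otimes> y) = (P #> x) \<otimes>\<^bsub>?F\<^esub> (P #> y)"
      using normal.rcos_sum[OF P] xy Qc by (simp add: subsetD)
    then have "(P #> (x \<otimes> y)) [^]\<^bsub>?F\<^esub> e = ((P #> x) \<otimes>\<^bsub>?F\<^esub> (P #> y)) [^]\<^bsub>?F\<^esub> e"
      by (simp only:)
    also have "\<dots> = (P #> x) [^]\<^bsub>?F\<^esub> e \<otimes>\<^bsub>?F\<^esub> (P #> y) [^]\<^bsub>?F\<^esub> e"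
      using F.pow_mult_distrib[OF F.m_comm[OF xy_F] xy_F] .
    also have "\<dots> = \<one>\<^bsub>?F\<^esub>"
      using xy pow_iff[of x e] pow_iff[of y e] F.l_one[OF F.one_closed]
      by (metis (no_types, lifting) mem_Collect_eq)
    finally show "x \<otimes> y \<in> ?L"
      using pow_iff xy subgroup.m_closed[OF sQ] by auto
  qed
  show ?thesis
    unfolding normal_inv_iff
  proof (intro conjI sL ballI)
    fix b x assume b: "b \<in> carrier G" and x: "x \<in> ?L"
    then have "b \<otimes> x [^] e \<otimes> inv b \<in> P" "b \<otimes> x \<otimes> inv b \<in> Q"
      using P Q(1) unfolding normal_inv_iff by auto
    then show "b \<otimes> x \<otimes> inv b \<in> ?L"
      using conj_nat_pow[OF b, of x e] x Qc by auto
  qed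
qed

lemma (in group) normal_between_composite_cyclic:
  assumes P: "P \<lhd> G" and Q: "Q \<lhd> G" "P \<subseteq> Q"
    and cyclic: "cyclic_group (G\<lparr>carrier := Q\<rparr> Mod P)"
    and card: "card (carrier (G\<lparr>carrier := Q\<rparr> Mod P)) = d * e" "1 < d" "1 < e"
  obtains L where "L \<lhd> G" "P \<subseteq> L" "L \<subseteq> Q" "L \<noteq> P" "L \<noteq> Q"
proof -
  let ?F = "G\<lparr>carrier := Q\<rparr> Mod P" and ?L = "{x \<in> Q. x [^] e \<in> P}"
  have sP: "subgroup P G" and sQ: "subgroup Q G" using P Q normal_imp_subgroup by blast+
  interpret F: group ?F using subquotient_group[OF P sQ Q(2)] .
  obtain c where c: "c \<in> carrier ?F" "subgroup_generated ?F {c} = ?F"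
    using cyclic unfolding cyclic_group_def by blast
  obtain g where g: "g \<in> Q" "c = P #> g" using c(1) unfolding carrier_subquotient by blast
  have gc: "g \<in> carrier G" using g(1) subgroup.subset[OF sQ] by blast
  have "F.ord c = d * e"
    using F.cyclic_order_is_ord[OF c(1)] c(2) card by (simp add: order_def)
  then have g_pow_mem_iff: "g [^] m \<in> P \<longleftrightarrow> d * e dvd m" for m :: nat
    using subquotient_pow_eq_one_iff[OF P sQ Q(2) g(1)] F.pow_eq_id[OF c(1)] g(2) by simp
  have "?L \<lhd> G"
    using normal_power_preimage[OF P Q F.cyclic_imp_abelian_group[OF cyclic]] .
  moreover have "P \<subseteq> ?L"
    using Q(2) subgroup_nat_pow_closed[OF sP] by blast
  moreover have "g [^] d \<in> ?L - P"
    using g_pow_mem_iff[of "d * e"] g_pow_mem_iff[of d] card(2,3) g(1)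
      subgroup_nat_pow_closed[OF sQ] nat_pow_pow[OF gc, of d e]
    by (simp add: nat_dvd_not_less)
  moreover have "g \<in> Q - ?L"
    using g_pow_mem_iff[of e] card(2,3) g(1) by (simp add: nat_dvd_not_less)
  ultimately show thesis
    using that by blast
qed

definition cyclic_normal_step :: "('a, 'b) monoid_scheme \<Rightarrow> 'a set \<Rightarrow> 'a set \<Rightarrow> bool" where
  "cyclic_normal_step G U V \<longleftrightarrow>
     U \<lhd> G \<and> V \<lhd> G \<and> U \<subseteq> V \<and> cyclic_group (G\<lparr>carrier := V\<rparr> Mod U)"

definition prime_or_infinite_cyclic_step :: "('a, 'b) monoid_scheme \<Rightarrow> 'a set \<Rightarrow> 'a set \<Rightarrow> bool" where
  "prime_or_infinite_cyclic_step G U V \<longleftrightarrow> cyclic_normal_step G U V \<and>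
     (infinite (carrier (G\<lparr>carrier := V\<rparr> Mod U)) \<or>
      Factorial_Ring.prime (card (carrier (G\<lparr>carrier := V\<rparr> Mod U))))"

lemma nat_one_or_prime_or_composite:
  fixes n :: nat
  assumes "n \<noteq> 0"
  obtains "n = 1" | "Factorial_Ring.prime n" | d e where "n = d * e" "1 < d" "1 < e"
proof (cases "n = 1 \<or> Factorial_Ring.prime n")
  case False
  then have "1 < n" using assms by linarith
  then obtain d where d: "d dvd n" "d \<noteq> 1" "d \<noteq> n"
    using False unfolding prime_nat_iff by blast
  then obtain e where e: "n = d * e" by blast
  have "d \<noteq> 0" "e \<noteq> 0" "e \<noteq> 1" using e d(3) assms by auto
  then have "1 < d" "1 < e" using d(2) by linarith+
  then show ?thesis using that(3) e by blast
qed (use that(1,2) in blast)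

lemma (in group) subquotient_card_one:
  assumes "subgroup P G" "subgroup Q G" "card (carrier (G\<lparr>carrier := Q\<rparr> Mod P)) = 1"
  shows "Q \<subseteq> P"
proof
  fix x assume x: "x \<in> Q"
  then have "P #> x \<in> carrier (G\<lparr>carrier := Q\<rparr> Mod P)" "P #> \<one> \<in> carrier (G\<lparr>carrier := Q\<rparr> Mod P)"
    using subgroup.one_closed[OF assms(2)] unfolding carrier_subquotient by blast+
  then have "P #> x = P #> \<one>" using assms(3) by (metis card_1_singletonE singletonD)
  then show "x \<in> P"
    using rcos_eq_iff[OF assms(1) _ one_closed] x subgroup.subset[OF assms(2)] by auto
qed

lemma (in group) cyclic_normal_step_split:
  assumes step: "cyclic_normal_step G P Q" and L: "L \<lhd> G" "P \<subseteq> L" "L \<subseteq> Q"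
  shows "cyclic_normal_step G P L" and "cyclic_normal_step G L Q"
proof -
  have P: "P \<lhd> G" and Q: "Q \<lhd> G" "P \<subseteq> Q" and cyclic: "cyclic_group (G\<lparr>carrier := Q\<rparr> Mod P)"
    using step unfolding cyclic_normal_step_def by auto
  have sP: "subgroup P G" and sQ: "subgroup Q G" and sL: "subgroup L G"
    using P Q(1) L(1) normal_imp_subgroup by blast+
  have "cyclic_group (G\<lparr>carrier := L\<rparr> Mod P)"
    using cyclic_subquotient[OF P sQ Q(2) cyclic P sL L(2) sL L(3) subset_refl]
      subgroup_set_mult_absorb[OF sL L(2) subgroup.one_closed[OF sP]] by blast
  then show "cyclic_normal_step G P L"
    using P L by (simp add: cyclic_normal_step_def)
  have "cyclic_group (G\<lparr>carrier := Q\<rparr> Mod L)"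
    using cyclic_subquotient[OF P sQ Q(2) cyclic L(1) sQ L(3) sQ subset_refl subset_refl]
      subgroup_set_mult_absorb[OF sQ L(3) subgroup.one_closed[OF sL]] L(2) by blast
  then show "cyclic_normal_step G L Q"
    using Q L by (simp add: cyclic_normal_step_def)
qed

lemma (in group) cyclic_normal_step_refine:
  assumes "cyclic_normal_step G P Q"
  shows "(prime_or_infinite_cyclic_step G)\<^sup>*\<^sup>* P Q"
proof (cases "finite (carrier (G\<lparr>carrier := Q\<rparr> Mod P))")
  case False
  then show ?thesis
    using assms by (intro r_into_rtranclp) (simp add: prime_or_infinite_cyclic_step_def)
next
  case True
  then show ?thesis using assms
  proof (induction "card (carrier (G\<lparr>carrier := Q\<rparr> Mod P))" arbitrary: P Q rule: less_induct)
    case less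
    have P: "P \<lhd> G" and Q: "Q \<lhd> G" "P \<subseteq> Q"
      and cyclic: "cyclic_group (G\<lparr>carrier := Q\<rparr> Mod P)"
      using less.prems(2) unfolding cyclic_normal_step_def by auto
    have sP: "subgroup P G" and sQ: "subgroup Q G" using P Q normal_imp_subgroup by blast+
    have Qc: "Q \<subseteq> carrier G" using subgroup.subset[OF sQ] .
    have "P #> \<one> \<in> carrier (G\<lparr>carrier := Q\<rparr> Mod P)"
      unfolding carrier_subquotient using subgroup.one_closed[OF sQ] by (rule imageI)
    then have "card (carrier (G\<lparr>carrier := Q\<rparr> Mod P)) \<noteq> 0"
      using less.prems(1) by (metis card_0_eq empty_iff)
    then show ?case
    proof (cases rule: nat_one_or_prime_or_composite)
      case 1
      then show ?thesis using subquotient_card_one[OF sP sQ] Q(2) by simp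
    next
      case 2
      then show ?thesis
        using less.prems(2) by (intro r_into_rtranclp) (simp add: prime_or_infinite_cyclic_step_def)
    next
      case (3 d e)
      then obtain L where L: "L \<lhd> G" "P \<subseteq> L" "L \<subseteq> Q" "L \<noteq> P" "L \<noteq> Q"
        using normal_between_composite_cyclic[OF P Q cyclic] by blast
      have sL: "subgroup L G" using normal_imp_subgroup[OF L(1)] .
      note steps = cyclic_normal_step_split[OF less.prems(2) L(1-3)]
      have "finite (carrier (G\<lparr>carrier := L\<rparr> Mod P))"
        using less.prems(1) finite_subset[OF image_mono[OF L(3)]]
        unfolding carrier_subquotient by blast
      then have "(prime_or_infinite_cyclic_step G)\<^sup>*\<^sup>* P L"
        using less.hyps[OF card_subquotient_less_bottom[OF sP L(2) sL L(3,5) Qc less.prems(1)]]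
          steps(1) by blast
      moreover have "finite (carrier (G\<lparr>carrier := Q\<rparr> Mod L))"
        using carrier_subquotient_coarsen[OF sP sL L(2) Qc] less.prems(1) by simp
      then have "(prime_or_infinite_cyclic_step G)\<^sup>*\<^sup>* L Q"
        using less.hyps[OF card_subquotient_less_top[OF sP L(2) L(4)[symmetric] sL L(3) Qc
              less.prems(1)]] steps(2) by blast
      ultimately show ?thesis by (rule rtranclp_trans)
    qed
  qed
qed

lemma (in group) cyclic_normal_step_relative:
  assumes step: "cyclic_normal_step G U V" and P: "P \<lhd> G" and Q: "Q \<lhd> G" "P \<subseteq> Q"
  shows "cyclic_normal_step G ((Q \<inter> U) <#> P) ((Q \<inter> V) <#> P)"
proof -
  have U: "U \<lhd> G" "U \<subseteq> V" and V: "V \<lhd> G" and cyclic: "cyclic_group (G\<lparr>carrier := V\<rparr> Mod U)"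
    using step unfolding cyclic_normal_step_def by auto
  let ?K = "(Q \<inter> U) <#> P" and ?H = "(Q \<inter> V) <#> P"
  have K: "?K \<lhd> G"
    using normal_subgroup_set_mult_closed[OF normal_subgroup_intersect[OF Q(1) U(1)] P] .
  have H: "?H \<lhd> G"
    using normal_subgroup_set_mult_closed[OF normal_subgroup_intersect[OF Q(1) V] P] .
  have sP: "subgroup P G" using normal_imp_subgroup[OF P] .
  have sW: "subgroup (Q \<inter> V) G" using normal_imp_subgroup[OF normal_subgroup_intersect[OF Q(1) V]] .
  have sQU: "subgroup (Q \<inter> U) G"
    using normal_imp_subgroup[OF normal_subgroup_intersect[OF Q(1) U(1)]] .
  have one: "\<one> \<in> P" "\<one> \<in> Q \<inter> U"
    using subgroup.one_closed[OF sP] subgroup.one_closed[OF sQU] by auto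
  have KH: "?K \<subseteq> ?H" using U(2) by (intro mono_set_mult) auto
  have WH: "Q \<inter> V \<subseteq> ?H" using subset_set_mult_one(1)[OF subgroup.subset[OF sW] one(1)] .
  have "Q \<inter> U \<subseteq> ?K"
    using subset_set_mult_one(1)[OF subgroup.subset[OF sQU] one(1)] .
  then have WU: "(Q \<inter> V) \<inter> U \<subseteq> ?K" using U(2) by blast
  have "P \<subseteq> ?K" using subset_set_mult_one(2)[OF subgroup.subset[OF sP] one(2)] .
  then have cover: "?H \<subseteq> (Q \<inter> V) <#> ?K" by (intro mono_set_mult) auto
  have "cyclic_group (G\<lparr>carrier := ?H\<rparr> Mod ?K)"
    using cyclic_subquotient[OF U(1) normal_imp_subgroup[OF V] U(2) cyclic K
        normal_imp_subgroup[OF H] KH sW _ WH WU cover] by blast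
  then show ?thesis using K H KH unfolding cyclic_normal_step_def by blast
qed

lemma (in group) cyclic_normal_series_between:
  assumes series: "(cyclic_normal_step G)\<^sup>*\<^sup>* {\<one>} (carrier G)"
    and P: "P \<lhd> G" and Q: "Q \<lhd> G" "P \<subseteq> Q"
  shows "(cyclic_normal_step G)\<^sup>*\<^sup>* P Q"
proof -
  have sP: "subgroup P G" and sQ: "subgroup Q G" using P Q normal_imp_subgroup by blast+
  have "(cyclic_normal_step G)\<^sup>*\<^sup>* ((Q \<inter> {\<one>}) <#> P) ((Q \<inter> carrier G) <#> P)"
    by (rule rtranclp_map[where R = "cyclic_normal_step G" and S = "cyclic_normal_step G"
          and f = "\<lambda>U. (Q \<inter> U) <#> P", OF cyclic_normal_step_relative[OF _ P Q] series])
  moreover have "(Q \<inter> {\<one>}) <#> P = P"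
    using subgroup.one_closed[OF sQ] lcos_mult_one[OF subgroup.subset[OF sP]]
    by (simp add: l_coset_eq_set_mult)
  moreover have "(Q \<inter> carrier G) <#> P = Q"
    using subgroup_set_mult_absorb[OF sQ Q(2) subgroup.one_closed[OF sP]] subgroup.subset[OF sQ]
    by (simp add: Int_absorb2)
  ultimately show ?thesis by simp
qed

lemma (in group) supersoluble_group_cyclic_normal_series:
  assumes "supersoluble_group G"
  shows "(cyclic_normal_step G)\<^sup>*\<^sup>* {\<one>} (carrier G)"
proof -
  obtain N m where N: "N 0 = {\<one>}" "N m = carrier G" "\<forall>i\<le>m. N i \<lhd> G"
    "\<forall>i<m. N i \<subseteq> N (Suc i)" "\<forall>i<m. cyclic_group (G\<lparr>carrier := N (Suc i)\<rparr> Mod N i)"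
    using assms unfolding supersoluble_group_def by blast
  have "(cyclic_normal_step G ^^ m) (N 0) (N m)"
    unfolding relpowp_fun_conv cyclic_normal_step_def using N(3-5) by (intro exI[of _ N]) auto
  then have "(cyclic_normal_step G)\<^sup>*\<^sup>* (N 0) (N m)" by (rule relpowp_imp_rtranclp)
  then show ?thesis using N(1,2) by simp
qed

theorem (in group) supersoluble_group_normal_series_between:
  assumes "supersoluble_group G" "P \<lhd> G" "Q \<lhd> G" "P \<subseteq> Q"
  shows "(prime_or_infinite_cyclic_step G)\<^sup>*\<^sup>* P Q"
  using cyclic_normal_series_between[OF supersoluble_group_cyclic_normal_series[OF assms(1)] assms(2-4)]
proof (induction rule: rtranclp_induct)
  case (step U V)
  show ?case using step.IH cyclic_normal_step_refine[OF step.hyps(2)] by (rule rtranclp_trans)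
qed simp

section \<open>Ideals and the socle of a skew brace\<close>

definition brace_supersoluble_step ::
    "('a, 'b) monoid_scheme \<Rightarrow> ('a, 'c) monoid_scheme \<Rightarrow> 'a set \<Rightarrow> 'a set \<Rightarrow> bool" where
  "brace_supersoluble_step A M U V \<longleftrightarrow>
     brace_ideal A M U \<and> brace_ideal A M V \<and> U \<subseteq> V \<and>
     ((infinite (carrier (A\<lparr>carrier := V\<rparr> Mod U)) \<and> cyclic_group (A\<lparr>carrier := V\<rparr> Mod U) \<and>
       carrier (A\<lparr>carrier := V\<rparr> Mod U) \<subseteq> brace_socle (A Mod U) (M Mod U)) \<or>
      Factorial_Ring.prime (card (carrier (A\<lparr>carrier := V\<rparr> Mod U))))"

lemma supersoluble_braceI:
  assumes "brace_ideal A M {\<one>\<^bsub>A\<^esub>}" "(brace_supersoluble_step A M)\<^sup>*\<^sup>* {\<one>\<^bsub>A\<^esub>} (carrier A)"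
  shows "supersoluble_brace A M"
proof -
  obtain m where "(brace_supersoluble_step A M ^^ m) {\<one>\<^bsub>A\<^esub>} (carrier A)"
    using rtranclp_imp_relpowp[OF assms(2)] ..
  then obtain I where I: "I 0 = {\<one>\<^bsub>A\<^esub>}" "I m = carrier A"
    and steps: "\<forall>i<m. brace_supersoluble_step A M (I i) (I (Suc i))"
    unfolding relpowp_fun_conv by blast
  have "brace_ideal A M (I i)" if "i \<le> m" for i
  proof (cases i)
    case (Suc j)
    then show ?thesis using steps that unfolding brace_supersoluble_step_def by auto
  qed (use I(1) assms(1) in simp)
  then show ?thesis
    unfolding supersoluble_brace_def using I steps
    by (intro exI[of _ I] exI[of _ m]) (auto simp: brace_supersoluble_step_def)
qed

locale skew_brace = A: group A + M: group M
  for A :: "('a, 'b) monoid_scheme" and M :: "('a, 'c) monoid_scheme" +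
  assumes carrier_M: "carrier M = carrier A"
  and brace_distrib: "\<lbrakk>a \<in> carrier A; b \<in> carrier A; c \<in> carrier A\<rbrakk> \<Longrightarrow>
     a \<otimes>\<^bsub>M\<^esub> (b \<otimes>\<^bsub>A\<^esub> c)
        = (a \<otimes>\<^bsub>M\<^esub> b) \<otimes>\<^bsub>A\<^esub> inv\<^bsub>A\<^esub> a \<otimes>\<^bsub>A\<^esub> (a \<otimes>\<^bsub>M\<^esub> c)"
begin

abbreviation lam where "lam \<equiv> brace_lambda A M"

lemma M_mult_closed[simp]: "x \<in> carrier A \<Longrightarrow> y \<in> carrier A \<Longrightarrow> x \<otimes>\<^bsub>M\<^esub> y \<in> carrier A"
  using M.m_closed carrier_M by auto

lemma M_inv_closed[simp]: "x \<in> carrier A \<Longrightarrow> inv\<^bsub>M\<^esub> x \<in> carrier A"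
  using M.inv_closed carrier_M by auto

lemma one_M_eq: "\<one>\<^bsub>M\<^esub> = \<one>\<^bsub>A\<^esub>"
proof -
  have one_M: "\<one>\<^bsub>M\<^esub> \<in> carrier A" using carrier_M by auto
  have "\<one>\<^bsub>A\<^esub> = \<one>\<^bsub>M\<^esub> \<otimes>\<^bsub>M\<^esub> (\<one>\<^bsub>A\<^esub> \<otimes>\<^bsub>A\<^esub> \<one>\<^bsub>A\<^esub>)"
    using carrier_M by simp
  also have "\<dots> = \<one>\<^bsub>A\<^esub> \<otimes>\<^bsub>A\<^esub> inv\<^bsub>A\<^esub> \<one>\<^bsub>M\<^esub> \<otimes>\<^bsub>A\<^esub> \<one>\<^bsub>A\<^esub>"
    using brace_distrib[OF one_M A.one_closed A.one_closed] one_M carrier_M by simp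
  finally have "inv\<^bsub>A\<^esub> \<one>\<^bsub>M\<^esub> = \<one>\<^bsub>A\<^esub>" using one_M by simp
  then show ?thesis using one_M by (metis A.inv_inv A.inv_one)
qed

lemma lambda_eq: "lam a b = inv\<^bsub>A\<^esub> a \<otimes>\<^bsub>A\<^esub> (a \<otimes>\<^bsub>M\<^esub> b)"
  by (simp add: brace_lambda_def)

lemma lambda_closed[simp]: "a \<in> carrier A \<Longrightarrow> b \<in> carrier A \<Longrightarrow> lam a b \<in> carrier A"
  by (simp add: lambda_eq)

lemma mult_eq_add_lambda: "a \<in> carrier A \<Longrightarrow> b \<in> carrier A \<Longrightarrow> a \<otimes>\<^bsub>M\<^esub> b = a \<otimes>\<^bsub>A\<^esub> lam a b"
  by (simp add: lambda_eq A.m_assoc[symmetric])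

lemma lambda_add: "a \<in> carrier A \<Longrightarrow> b \<in> carrier A \<Longrightarrow> c \<in> carrier A \<Longrightarrow>
   lam a (b \<otimes>\<^bsub>A\<^esub> c) = lam a b \<otimes>\<^bsub>A\<^esub> lam a c"
  by (simp add: lambda_eq brace_distrib A.m_assoc)

lemma lambda_mult:
  assumes a: "a \<in> carrier A" and b: "b \<in> carrier A" and c: "c \<in> carrier A"
  shows "lam (a \<otimes>\<^bsub>M\<^esub> b) c = lam a (lam b c)"
proof -
  have "(a \<otimes>\<^bsub>M\<^esub> b) \<otimes>\<^bsub>M\<^esub> c = a \<otimes>\<^bsub>M\<^esub> (b \<otimes>\<^bsub>M\<^esub> c)"
    using a b c by (simp add: M.m_assoc carrier_M)
  also have "b \<otimes>\<^bsub>M\<^esub> c = b \<otimes>\<^bsub>A\<^esub> lam b c" using b c by (rule mult_eq_add_lambda)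
  also have "a \<otimes>\<^bsub>M\<^esub> (b \<otimes>\<^bsub>A\<^esub> lam b c) =
      (a \<otimes>\<^bsub>M\<^esub> b) \<otimes>\<^bsub>A\<^esub> (inv\<^bsub>A\<^esub> a \<otimes>\<^bsub>A\<^esub> (a \<otimes>\<^bsub>M\<^esub> lam b c))"
    using a b c by (simp add: brace_distrib A.m_assoc)
  finally have e: "(a \<otimes>\<^bsub>M\<^esub> b) \<otimes>\<^bsub>M\<^esub> c = (a \<otimes>\<^bsub>M\<^esub> b) \<otimes>\<^bsub>A\<^esub> lam a (lam b c)"
    by (simp add: lambda_eq)
  show ?thesis unfolding lambda_eq[of "a \<otimes>\<^bsub>M\<^esub> b"] e using a b c
    by (simp add: A.m_assoc[symmetric])
qed

lemma lambda_one_left[simp]: "c \<in> carrier A \<Longrightarrow> lam \<one>\<^bsub>A\<^esub> c = c"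
  using one_M_eq by (metis A.inv_one A.l_one M.l_one carrier_M lambda_eq)

lemma lambda_one_right[simp]: "a \<in> carrier A \<Longrightarrow> lam a \<one>\<^bsub>A\<^esub> = \<one>\<^bsub>A\<^esub>"
  using one_M_eq by (metis A.l_inv M.r_one carrier_M lambda_eq)

lemma lambda_inv_M_left[simp]: "a \<in> carrier A \<Longrightarrow> c \<in> carrier A \<Longrightarrow> lam (inv\<^bsub>M\<^esub> a) (lam a c) = c"
  by (metis M.l_inv carrier_M lambda_mult M_inv_closed lambda_one_left one_M_eq)

lemma lambda_inv_M_right[simp]: "a \<in> carrier A \<Longrightarrow> c \<in> carrier A \<Longrightarrow> lam a (lam (inv\<^bsub>M\<^esub> a) c) = c"
  by (metis M.r_inv carrier_M lambda_mult M_inv_closed lambda_one_left one_M_eq)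

lemma lambda_inv_A: "a \<in> carrier A \<Longrightarrow> b \<in> carrier A \<Longrightarrow> lam a (inv\<^bsub>A\<^esub> b) = inv\<^bsub>A\<^esub> (lam a b)"
  by (metis A.inv_closed A.inv_equality A.l_inv lambda_add lambda_closed lambda_one_right)

text \<open>For an ideal \<open>J\<close>, \<open>coset J x\<close> is the element represented by \<open>x\<close> in both quotient
  groups \<open>A Mod J\<close> and \<open>M Mod J\<close> (see \<open>ideal_rcos_M_eq_A\<close>).\<close>

definition coset :: "'a set \<Rightarrow> 'a \<Rightarrow> 'a set" where "coset J x = J #>\<^bsub>A\<^esub> x"

lemma
  assumes "brace_ideal A M J"
  shows ideal_subset: "J \<subseteq> carrier A"
    and ideal_normal_A: "J \<lhd> A" and ideal_normal_M: "J \<lhd> M"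
    and ideal_subgroup_A: "subgroup J A" and ideal_subgroup_M: "subgroup J M"
    and ideal_lambda_closed: "a \<in> carrier A \<Longrightarrow> j \<in> J \<Longrightarrow> lam a j \<in> J"
  using assms subgroup.subset unfolding brace_ideal_def by blast+

lemma ideal_lcos_M_eq_A:
  assumes ideal: "brace_ideal A M J" and x: "x \<in> carrier A"
  shows "x <#\<^bsub>M\<^esub> J = x <#\<^bsub>A\<^esub> J"
proof
  show "x <#\<^bsub>M\<^esub> J \<subseteq> x <#\<^bsub>A\<^esub> J"
  proof
    fix z assume "z \<in> x <#\<^bsub>M\<^esub> J"
    then obtain j where j: "j \<in> J" "z = x \<otimes>\<^bsub>M\<^esub> j" unfolding l_coset_def by auto
    have "z = x \<otimes>\<^bsub>A\<^esub> lam x j" using j x ideal_subset[OF ideal] mult_eq_add_lambda by auto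
    thus "z \<in> x <#\<^bsub>A\<^esub> J" using ideal_lambda_closed[OF ideal x j(1)] unfolding l_coset_def by auto
  qed
next
  show "x <#\<^bsub>A\<^esub> J \<subseteq> x <#\<^bsub>M\<^esub> J"
  proof
    fix z assume "z \<in> x <#\<^bsub>A\<^esub> J"
    then obtain j where j: "j \<in> J" "z = x \<otimes>\<^bsub>A\<^esub> j" unfolding l_coset_def by auto
    have jc: "j \<in> carrier A" using j ideal_subset[OF ideal] by auto
    have "z = x \<otimes>\<^bsub>M\<^esub> lam (inv\<^bsub>M\<^esub> x) j" using j x jc mult_eq_add_lambda by auto
    thus "z \<in> x <#\<^bsub>M\<^esub> J" using ideal_lambda_closed[OF ideal _ j(1), of "inv\<^bsub>M\<^esub> x"] x
      unfolding l_coset_def by auto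
  qed
qed

lemma ideal_rcos_M_eq_A:
  assumes ideal: "brace_ideal A M J" and x: "x \<in> carrier A"
  shows "J #>\<^bsub>M\<^esub> x = J #>\<^bsub>A\<^esub> x"
proof -
  have "J #>\<^bsub>M\<^esub> x = x <#\<^bsub>M\<^esub> J" using normal.coset_eq[OF ideal_normal_M[OF ideal]] x carrier_M by auto
  also have "\<dots> = x <#\<^bsub>A\<^esub> J" by (rule ideal_lcos_M_eq_A[OF ideal x])
  also have "\<dots> = J #>\<^bsub>A\<^esub> x" using normal.coset_eq[OF ideal_normal_A[OF ideal]] x by auto
  finally show ?thesis .
qed

lemma coset_eq_iff: "brace_ideal A M J \<Longrightarrow> x \<in> carrier A \<Longrightarrow> y \<in> carrier A \<Longrightarrow>
   coset J x = coset J y \<longleftrightarrow> x \<otimes>\<^bsub>A\<^esub> inv\<^bsub>A\<^esub> y \<in> J"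
  unfolding coset_def using A.rcos_eq_iff ideal_subgroup_A by blast

lemma coset_eq_iff_M: "brace_ideal A M J \<Longrightarrow> x \<in> carrier A \<Longrightarrow> y \<in> carrier A \<Longrightarrow>
   coset J x = coset J y \<longleftrightarrow> x \<otimes>\<^bsub>M\<^esub> inv\<^bsub>M\<^esub> y \<in> J"
  unfolding coset_def using M.rcos_eq_iff ideal_subgroup_M ideal_rcos_M_eq_A carrier_M by metis

lemma coset_eq_one_iff:
  assumes "brace_ideal A M J" "x \<in> carrier A"
  shows "coset J x = coset J \<one>\<^bsub>A\<^esub> \<longleftrightarrow> x \<in> J"
  using A.rcos_eq_iff[OF ideal_subgroup_A[OF assms(1)] assms(2) A.one_closed] assms(2)
  by (simp add: coset_def)

lemma coset_add_cong:
  assumes ideal: "brace_ideal A M J"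
  and c: "x \<in> carrier A" "x' \<in> carrier A" "y \<in> carrier A" "y' \<in> carrier A"
  and e: "coset J x = coset J x'" "coset J y = coset J y'"
  shows "coset J (x \<otimes>\<^bsub>A\<^esub> y) = coset J (x' \<otimes>\<^bsub>A\<^esub> y')"
  using e c normal.rcos_sum[OF ideal_normal_A[OF ideal]] unfolding coset_def by metis

lemma coset_mult_cong:
  assumes ideal: "brace_ideal A M J"
  and c: "x \<in> carrier A" "x' \<in> carrier A" "y \<in> carrier A" "y' \<in> carrier A"
  and e: "coset J x = coset J x'" "coset J y = coset J y'"
  shows "coset J (x \<otimes>\<^bsub>M\<^esub> y) = coset J (x' \<otimes>\<^bsub>M\<^esub> y')"
proof -
  have "coset J (x \<otimes>\<^bsub>M\<^esub> y) = (J #>\<^bsub>M\<^esub> x) <#>\<^bsub>M\<^esub> (J #>\<^bsub>M\<^esub> y)"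
    using normal.rcos_sum[OF ideal_normal_M[OF ideal]] c carrier_M ideal_rcos_M_eq_A[OF ideal]
    unfolding coset_def by simp
  also have "\<dots> = (J #>\<^bsub>M\<^esub> x') <#>\<^bsub>M\<^esub> (J #>\<^bsub>M\<^esub> y')"
    using e c ideal_rcos_M_eq_A[OF ideal] unfolding coset_def by simp
  also have "\<dots> = coset J (x' \<otimes>\<^bsub>M\<^esub> y')"
    using normal.rcos_sum[OF ideal_normal_M[OF ideal]] c carrier_M ideal_rcos_M_eq_A[OF ideal]
    unfolding coset_def by simp
  finally show ?thesis .
qed

lemma coset_inv_cong:
  assumes ideal: "brace_ideal A M J"
  and c: "x \<in> carrier A" "x' \<in> carrier A" and e: "coset J x = coset J x'"
  shows "coset J (inv\<^bsub>A\<^esub> x) = coset J (inv\<^bsub>A\<^esub> x')"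
  using e c normal.rcos_inv[OF ideal_normal_A[OF ideal]] unfolding coset_def by metis

lemma coset_lambda_cong:
  assumes ideal: "brace_ideal A M J"
  and c: "a \<in> carrier A" "x \<in> carrier A" "x' \<in> carrier A" and e: "coset J x = coset J x'"
  shows "coset J (lam a x) = coset J (lam a x')"
proof -
  have "x \<otimes>\<^bsub>A\<^esub> inv\<^bsub>A\<^esub> x' \<in> J" using coset_eq_iff[OF ideal] c e by blast
  hence "lam a (x \<otimes>\<^bsub>A\<^esub> inv\<^bsub>A\<^esub> x') \<in> J" using ideal_lambda_closed[OF ideal c(1)] by blast
  hence "lam a x \<otimes>\<^bsub>A\<^esub> inv\<^bsub>A\<^esub> lam a x' \<in> J" using c by (simp add: lambda_add lambda_inv_A)
  thus ?thesis using coset_eq_iff[OF ideal] c by simp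
qed

lemma coset_of_mem: "brace_ideal A M J \<Longrightarrow> j \<in> J \<Longrightarrow> coset J j = coset J \<one>\<^bsub>A\<^esub>"
  using coset_eq_one_iff ideal_subset by blast

lemma trivial_brace_ideal: "brace_ideal A M {\<one>\<^bsub>A\<^esub>}"
proof -
  have lam_one: "lam b ` {\<one>\<^bsub>A\<^esub>} \<subseteq> {\<one>\<^bsub>A\<^esub>}" if "b \<in> carrier A" for b
    using that by simp
  show ?thesis
    unfolding brace_ideal_def
    by (intro conjI ballI normal_imp_subgroup A.one_is_normal M.one_is_normal[unfolded one_M_eq]
        lam_one)
qed

text \<open>The preimage of \<open>Soc(B/J)\<close> in \<open>B\<close>, described without quotients
  (see \<open>Union_socle_quotient\<close>).\<close>

definition socle_preimage :: "'a set \<Rightarrow> 'a set" where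
  "socle_preimage J = {x \<in> carrier A. \<forall>y\<in>carrier A. coset J (lam x y) = coset J y
        \<and> coset J (x \<otimes>\<^bsub>A\<^esub> y) = coset J (y \<otimes>\<^bsub>A\<^esub> x)}"

lemma socle_preimage_subset: "socle_preimage J \<subseteq> carrier A"
  unfolding socle_preimage_def by auto

lemma
  assumes "x \<in> socle_preimage J" "y \<in> carrier A"
  shows socle_preimage_lambda: "coset J (lam x y) = coset J y"
    and socle_preimage_commute: "coset J (x \<otimes>\<^bsub>A\<^esub> y) = coset J (y \<otimes>\<^bsub>A\<^esub> x)"
  using assms unfolding socle_preimage_def by auto

lemma socle_preimageI:
  assumes "x \<in> carrier A"
    and "\<And>y. y \<in> carrier A \<Longrightarrow> coset J (lam x y) = coset J y"
    and "\<And>y. y \<in> carrier A \<Longrightarrow> coset J (x \<otimes>\<^bsub>A\<^esub> y) = coset J (y \<otimes>\<^bsub>A\<^esub> x)"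
  shows "x \<in> socle_preimage J"
  using assms unfolding socle_preimage_def by auto

lemma socle_preimage_coset_mult:
  assumes ideal: "brace_ideal A M J" and x: "x \<in> socle_preimage J" and y: "y \<in> carrier A"
  shows "coset J (x \<otimes>\<^bsub>M\<^esub> y) = coset J (x \<otimes>\<^bsub>A\<^esub> y)"
proof -
  have xc: "x \<in> carrier A" using x socle_preimage_subset by auto
  have "x \<otimes>\<^bsub>M\<^esub> y = x \<otimes>\<^bsub>A\<^esub> lam x y" using xc y mult_eq_add_lambda by auto
  thus ?thesis using coset_add_cong[OF ideal xc xc _ y refl socle_preimage_lambda[OF x y]] xc y by simp
qed

lemma ideal_subset_socle_preimage:
  assumes ideal: "brace_ideal A M J"
  shows "J \<subseteq> socle_preimage J"
proof
  fix x assume x: "x \<in> J"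
  have xc: "x \<in> carrier A" using x ideal_subset[OF ideal] by auto
  have x1: "coset J x = coset J \<one>\<^bsub>A\<^esub>" using coset_of_mem[OF ideal x] .
  show "x \<in> socle_preimage J"
  proof (rule socle_preimageI[OF xc])
    fix y assume y: "y \<in> carrier A"
    have "coset J (lam x y) = coset J (x \<otimes>\<^bsub>A\<^esub> lam x y)"
      using coset_add_cong[OF ideal A.one_closed xc _ _ x1[symmetric] refl] xc y by simp
    also have "\<dots> = coset J (x \<otimes>\<^bsub>M\<^esub> y)" using mult_eq_add_lambda[OF xc y] by simp
    also have "\<dots> = coset J (\<one>\<^bsub>M\<^esub> \<otimes>\<^bsub>M\<^esub> y)"
      using coset_mult_cong[OF ideal xc _ y y _ refl, of "\<one>\<^bsub>M\<^esub>"] x1 one_M_eq by simp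
    also have "\<dots> = coset J y" using y carrier_M by simp
    finally show "coset J (lam x y) = coset J y" .
    have "coset J (x \<otimes>\<^bsub>A\<^esub> y) = coset J (\<one>\<^bsub>A\<^esub> \<otimes>\<^bsub>A\<^esub> y)"
      using coset_add_cong[OF ideal xc _ y y x1] y by simp
    also have "\<dots> = coset J (y \<otimes>\<^bsub>A\<^esub> \<one>\<^bsub>A\<^esub>)" using y by simp
    also have "\<dots> = coset J (y \<otimes>\<^bsub>A\<^esub> x)"
      using coset_add_cong[OF ideal y y _ xc refl x1[symmetric]] y by simp
    finally show "coset J (x \<otimes>\<^bsub>A\<^esub> y) = coset J (y \<otimes>\<^bsub>A\<^esub> x)" .
  qed
qed

lemma socle_preimage_one: "brace_ideal A M J \<Longrightarrow> \<one>\<^bsub>A\<^esub> \<in> socle_preimage J"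
  using ideal_subset_socle_preimage ideal_subgroup_A subgroup.one_closed by blast

lemma socle_preimage_mult_closed:
  assumes ideal: "brace_ideal A M J" and x: "x \<in> socle_preimage J" and y: "y \<in> socle_preimage J"
  shows "x \<otimes>\<^bsub>M\<^esub> y \<in> socle_preimage J"
proof -
  have xc: "x \<in> carrier A" and yc: "y \<in> carrier A" using x y socle_preimage_subset by auto
  show ?thesis
  proof (rule socle_preimageI)
    show "x \<otimes>\<^bsub>M\<^esub> y \<in> carrier A" using xc yc by simp
  next
    fix z assume z: "z \<in> carrier A"
    have "coset J (lam (x \<otimes>\<^bsub>M\<^esub> y) z) = coset J (lam x (lam y z))" using xc yc z lambda_mult by simp
    also have "\<dots> = coset J (lam y z)" using socle_preimage_lambda[OF x] yc z by simp
    also have "\<dots> = coset J z" using socle_preimage_lambda[OF y] z by simp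
    finally show "coset J (lam (x \<otimes>\<^bsub>M\<^esub> y) z) = coset J z" .
  next
    fix z assume z: "z \<in> carrier A"
    have e: "coset J (x \<otimes>\<^bsub>M\<^esub> y) = coset J (x \<otimes>\<^bsub>A\<^esub> y)" by (rule socle_preimage_coset_mult[OF ideal x yc])
    have "coset J ((x \<otimes>\<^bsub>M\<^esub> y) \<otimes>\<^bsub>A\<^esub> z) = coset J ((x \<otimes>\<^bsub>A\<^esub> y) \<otimes>\<^bsub>A\<^esub> z)"
      using coset_add_cong[OF ideal _ _ z z e] xc yc by simp
    also have "\<dots> = coset J (x \<otimes>\<^bsub>A\<^esub> (y \<otimes>\<^bsub>A\<^esub> z))" using xc yc z by (simp add: A.m_assoc)
    also have "\<dots> = coset J ((y \<otimes>\<^bsub>A\<^esub> z) \<otimes>\<^bsub>A\<^esub> x)" using socle_preimage_commute[OF x] yc z by simp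
    also have "\<dots> = coset J (y \<otimes>\<^bsub>A\<^esub> (z \<otimes>\<^bsub>A\<^esub> x))" using xc yc z by (simp add: A.m_assoc)
    also have "\<dots> = coset J ((z \<otimes>\<^bsub>A\<^esub> x) \<otimes>\<^bsub>A\<^esub> y)" using socle_preimage_commute[OF y] xc z by simp
    also have "\<dots> = coset J (z \<otimes>\<^bsub>A\<^esub> (x \<otimes>\<^bsub>A\<^esub> y))" using xc yc z by (simp add: A.m_assoc)
    also have "\<dots> = coset J (z \<otimes>\<^bsub>A\<^esub> (x \<otimes>\<^bsub>M\<^esub> y))"
      using coset_add_cong[OF ideal z z _ _ refl e[symmetric]] xc yc z by simp
    finally show "coset J ((x \<otimes>\<^bsub>M\<^esub> y) \<otimes>\<^bsub>A\<^esub> z) = coset J (z \<otimes>\<^bsub>A\<^esub> (x \<otimes>\<^bsub>M\<^esub> y))" .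
  qed
qed

lemma socle_preimage_inv_A_commute:
  assumes ideal: "brace_ideal A M J" and x: "x \<in> socle_preimage J" and z: "z \<in> carrier A"
  shows "coset J (inv\<^bsub>A\<^esub> x \<otimes>\<^bsub>A\<^esub> z) = coset J (z \<otimes>\<^bsub>A\<^esub> inv\<^bsub>A\<^esub> x)"
proof -
  have xc: "x \<in> carrier A" using x socle_preimage_subset by auto
  have "coset J (x \<otimes>\<^bsub>A\<^esub> (z \<otimes>\<^bsub>A\<^esub> inv\<^bsub>A\<^esub> x)) = coset J ((z \<otimes>\<^bsub>A\<^esub> inv\<^bsub>A\<^esub> x) \<otimes>\<^bsub>A\<^esub> x)"
    using socle_preimage_commute[OF x] xc z by simp
  also have "\<dots> = coset J z" using xc z by (simp add: A.m_assoc)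
  finally have e: "coset J z = coset J (x \<otimes>\<^bsub>A\<^esub> (z \<otimes>\<^bsub>A\<^esub> inv\<^bsub>A\<^esub> x))" by simp
  have "coset J (inv\<^bsub>A\<^esub> x \<otimes>\<^bsub>A\<^esub> z) = coset J (inv\<^bsub>A\<^esub> x \<otimes>\<^bsub>A\<^esub> (x \<otimes>\<^bsub>A\<^esub> (z \<otimes>\<^bsub>A\<^esub> inv\<^bsub>A\<^esub> x)))"
    using coset_add_cong[OF ideal _ _ z _ refl e] xc z by simp
  also have "\<dots> = coset J (z \<otimes>\<^bsub>A\<^esub> inv\<^bsub>A\<^esub> x)" using xc z by (simp add: A.m_assoc[symmetric])
  finally show ?thesis .
qed

lemma socle_preimage_coset_inv:
  assumes ideal: "brace_ideal A M J" and x: "x \<in> socle_preimage J"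
  shows "coset J (inv\<^bsub>M\<^esub> x) = coset J (inv\<^bsub>A\<^esub> x)"
proof -
  have xc: "x \<in> carrier A" using x socle_preimage_subset by auto
  have "x \<otimes>\<^bsub>A\<^esub> lam x (inv\<^bsub>M\<^esub> x) = \<one>\<^bsub>A\<^esub>"
    using mult_eq_add_lambda[OF xc, of "inv\<^bsub>M\<^esub> x"] xc carrier_M one_M_eq by (metis M.r_inv M_inv_closed)
  hence "lam x (inv\<^bsub>M\<^esub> x) = inv\<^bsub>A\<^esub> x" using xc
    by (metis A.inv_equality A.inv_inv A.inv_closed lambda_closed M_inv_closed)
  hence "coset J (lam x (inv\<^bsub>M\<^esub> x)) = coset J (inv\<^bsub>A\<^esub> x)" by simp
  thus ?thesis using socle_preimage_lambda[OF x, of "inv\<^bsub>M\<^esub> x"] xc by simp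
qed

lemma socle_preimage_inv_closed:
  assumes ideal: "brace_ideal A M J" and x: "x \<in> socle_preimage J"
  shows "inv\<^bsub>M\<^esub> x \<in> socle_preimage J"
proof -
  have xc: "x \<in> carrier A" using x socle_preimage_subset by auto
  show ?thesis
  proof (rule socle_preimageI)
    show "inv\<^bsub>M\<^esub> x \<in> carrier A" using xc by simp
  next
    fix z assume z: "z \<in> carrier A"
    have "coset J (lam (inv\<^bsub>M\<^esub> x) z) = coset J (lam x (lam (inv\<^bsub>M\<^esub> x) z))"
      using socle_preimage_lambda[OF x, of "lam (inv\<^bsub>M\<^esub> x) z"] xc z by simp
    also have "\<dots> = coset J z" using xc z by simp
    finally show "coset J (lam (inv\<^bsub>M\<^esub> x) z) = coset J z" .
  next
    fix z assume z: "z \<in> carrier A"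
    have e: "coset J (inv\<^bsub>M\<^esub> x) = coset J (inv\<^bsub>A\<^esub> x)" by (rule socle_preimage_coset_inv[OF ideal x])
    have "coset J (inv\<^bsub>M\<^esub> x \<otimes>\<^bsub>A\<^esub> z) = coset J (inv\<^bsub>A\<^esub> x \<otimes>\<^bsub>A\<^esub> z)"
      using coset_add_cong[OF ideal _ _ z z e] xc by simp
    also have "\<dots> = coset J (z \<otimes>\<^bsub>A\<^esub> inv\<^bsub>A\<^esub> x)" by (rule socle_preimage_inv_A_commute[OF ideal x z])
    also have "\<dots> = coset J (z \<otimes>\<^bsub>A\<^esub> inv\<^bsub>M\<^esub> x)"
      using coset_add_cong[OF ideal z z _ _ refl e[symmetric]] xc by simp
    finally show "coset J (inv\<^bsub>M\<^esub> x \<otimes>\<^bsub>A\<^esub> z) = coset J (z \<otimes>\<^bsub>A\<^esub> inv\<^bsub>M\<^esub> x)" .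
  qed
qed

lemma socle_preimage_lambda_commute:
  assumes ideal: "brace_ideal A M J" and x: "x \<in> socle_preimage J"
  and b: "b \<in> carrier A" and z: "z \<in> carrier A"
  shows "coset J (lam b x \<otimes>\<^bsub>A\<^esub> z) = coset J (z \<otimes>\<^bsub>A\<^esub> lam b x)"
proof -
  have xc: "x \<in> carrier A" using x socle_preimage_subset by auto
  define u where "u = lam (inv\<^bsub>M\<^esub> b) z"
  have u: "u \<in> carrier A" "z = lam b u" using b z unfolding u_def by simp_all
  have "coset J (lam b x \<otimes>\<^bsub>A\<^esub> z) = coset J (lam b (x \<otimes>\<^bsub>A\<^esub> u))" using u b xc lambda_add by simp
  also have "\<dots> = coset J (lam b (u \<otimes>\<^bsub>A\<^esub> x))"
    using coset_lambda_cong[OF ideal b _ _ socle_preimage_commute[OF x u(1)]] xc u by simp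
  also have "\<dots> = coset J (z \<otimes>\<^bsub>A\<^esub> lam b x)" using u b xc lambda_add by simp
  finally show ?thesis .
qed

lemma socle_preimage_conj:
  assumes ideal: "brace_ideal A M J" and x: "x \<in> socle_preimage J" and b: "b \<in> carrier A"
  shows "b \<otimes>\<^bsub>M\<^esub> x \<otimes>\<^bsub>M\<^esub> inv\<^bsub>M\<^esub> b \<in> socle_preimage J"
    and "coset J (b \<otimes>\<^bsub>M\<^esub> x \<otimes>\<^bsub>M\<^esub> inv\<^bsub>M\<^esub> b) = coset J (lam b x)"
proof -
  have xc: "x \<in> carrier A" using x socle_preimage_subset by auto
  define y where "y = b \<otimes>\<^bsub>M\<^esub> x \<otimes>\<^bsub>M\<^esub> inv\<^bsub>M\<^esub> b"
  have yc: "y \<in> carrier A" unfolding y_def using b xc by simp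
  have ylam: "coset J (lam y z) = coset J z" if z: "z \<in> carrier A" for z
  proof -
    have "lam y z = lam b (lam x (lam (inv\<^bsub>M\<^esub> b) z))" unfolding y_def
      using b xc z by (simp add: lambda_mult)
    hence "coset J (lam y z) = coset J (lam b (lam (inv\<^bsub>M\<^esub> b) z))"
      using coset_lambda_cong[OF ideal b _ _ socle_preimage_lambda[OF x, of "lam (inv\<^bsub>M\<^esub> b) z"]]
        b xc z by simp
    thus ?thesis using b z by simp
  qed
  have "y \<otimes>\<^bsub>M\<^esub> b = b \<otimes>\<^bsub>M\<^esub> x" unfolding y_def using b xc carrier_M by (simp add: M.m_assoc)
  hence "y \<otimes>\<^bsub>A\<^esub> lam y b = b \<otimes>\<^bsub>A\<^esub> lam b x" using mult_eq_add_lambda b xc yc by simp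
  hence "coset J (y \<otimes>\<^bsub>A\<^esub> b) = coset J (b \<otimes>\<^bsub>A\<^esub> lam b x)"
    using coset_add_cong[OF ideal yc yc _ b refl ylam[OF b]] b yc by simp
  also have "\<dots> = coset J (lam b x \<otimes>\<^bsub>A\<^esub> b)" using socle_preimage_lambda_commute[OF ideal x b b] by simp
  finally have e: "coset J (y \<otimes>\<^bsub>A\<^esub> b) = coset J (lam b x \<otimes>\<^bsub>A\<^esub> b)" .
  have "coset J ((y \<otimes>\<^bsub>A\<^esub> b) \<otimes>\<^bsub>A\<^esub> inv\<^bsub>A\<^esub> b) = coset J ((lam b x \<otimes>\<^bsub>A\<^esub> b) \<otimes>\<^bsub>A\<^esub> inv\<^bsub>A\<^esub> b)"
    using coset_add_cong[OF ideal _ _ _ _ e refl] b yc xc by simp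
  hence e2: "coset J y = coset J (lam b x)" using b yc xc by (simp add: A.m_assoc)
  thus "coset J (b \<otimes>\<^bsub>M\<^esub> x \<otimes>\<^bsub>M\<^esub> inv\<^bsub>M\<^esub> b) = coset J (lam b x)" unfolding y_def .
  show "b \<otimes>\<^bsub>M\<^esub> x \<otimes>\<^bsub>M\<^esub> inv\<^bsub>M\<^esub> b \<in> socle_preimage J" unfolding y_def[symmetric]
  proof (rule socle_preimageI[OF yc])
    fix z assume z: "z \<in> carrier A"
    show "coset J (lam y z) = coset J z" by (rule ylam[OF z])
    have "coset J (y \<otimes>\<^bsub>A\<^esub> z) = coset J (lam b x \<otimes>\<^bsub>A\<^esub> z)"
      using coset_add_cong[OF ideal _ _ z z e2] yc b xc by simp
    also have "\<dots> = coset J (z \<otimes>\<^bsub>A\<^esub> lam b x)" by (rule socle_preimage_lambda_commute[OF ideal x b z])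
    also have "\<dots> = coset J (z \<otimes>\<^bsub>A\<^esub> y)"
      using coset_add_cong[OF ideal z z _ _ refl e2[symmetric]] yc b xc by simp
    finally show "coset J (y \<otimes>\<^bsub>A\<^esub> z) = coset J (z \<otimes>\<^bsub>A\<^esub> y)" .
  qed
qed

lemma socle_preimage_normal:
  assumes ideal: "brace_ideal A M J"
  shows "socle_preimage J \<lhd> M"
proof -
  have "subgroup (socle_preimage J) M"
  proof (rule M.subgroupI)
    show "socle_preimage J \<subseteq> carrier M" using socle_preimage_subset carrier_M by simp
    show "socle_preimage J \<noteq> {}" using socle_preimage_one[OF ideal] by blast
  qed (simp_all add: socle_preimage_inv_closed[OF ideal] socle_preimage_mult_closed[OF ideal])
  then show ?thesis
    unfolding M.normal_inv_iff using socle_preimage_conj(1)[OF ideal] carrier_M by simp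
qed

lemma mem_of_coset_eq:
  assumes ideal: "brace_ideal A M J" and L: "subgroup L M" "J \<subseteq> L"
    and x: "x \<in> carrier A" and y: "y \<in> L" and eq: "coset J x = coset J y"
  shows "x \<in> L"
proof -
  have yc: "y \<in> carrier A" using y subgroup.subset[OF L(1)] carrier_M by blast
  have "x \<otimes>\<^bsub>M\<^esub> inv\<^bsub>M\<^esub> y \<in> L" using coset_eq_iff_M[OF ideal x yc] eq L(2) by blast
  then have "(x \<otimes>\<^bsub>M\<^esub> inv\<^bsub>M\<^esub> y) \<otimes>\<^bsub>M\<^esub> y \<in> L" using y subgroup.m_closed[OF L(1)] by blast
  then show ?thesis using x yc carrier_M by (simp add: M.m_assoc)
qed

lemma normal_below_socle_preimage_ideal:
  assumes ideal: "brace_ideal A M J" and L: "L \<lhd> M" "J \<subseteq> L" "L \<subseteq> socle_preimage J"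
  shows "brace_ideal A M L"
proof -
  have Lc: "L \<subseteq> carrier A" using L(3) socle_preimage_subset by blast
  have sgM: "subgroup L M" using L(1) normal_imp_subgroup by blast
  note memL = mem_of_coset_eq[OF ideal sgM L(2)]
  have sgA: "subgroup L A"
  proof (rule A.subgroupI[OF Lc])
    show "L \<noteq> {}" using subgroup.one_closed[OF sgM] by blast
  next
    fix a assume a: "a \<in> L"
    then show "inv\<^bsub>A\<^esub> a \<in> L"
      using memL[OF A.inv_closed subgroup.m_inv_closed[OF sgM a]]
        socle_preimage_coset_inv[OF ideal, symmetric] Lc L(3) by blast
  next
    fix a b assume a: "a \<in> L" and b: "b \<in> L"
    then show "a \<otimes>\<^bsub>A\<^esub> b \<in> L"
      using memL[OF A.m_closed subgroup.m_closed[OF sgM a b]]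
        socle_preimage_coset_mult[OF ideal, symmetric] Lc L(3) by blast
  qed
  have "L \<lhd> A" unfolding A.normal_inv_iff
  proof (intro conjI sgA ballI)
    fix a h assume a: "a \<in> carrier A" and h: "h \<in> L"
    have hc: "h \<in> carrier A" using h Lc by auto
    have "coset J (a \<otimes>\<^bsub>A\<^esub> h \<otimes>\<^bsub>A\<^esub> inv\<^bsub>A\<^esub> a) = coset J (h \<otimes>\<^bsub>A\<^esub> a \<otimes>\<^bsub>A\<^esub> inv\<^bsub>A\<^esub> a)"
      using coset_add_cong[OF ideal _ _ A.inv_closed[OF a] A.inv_closed[OF a]
          socle_preimage_commute[of h J a, symmetric] refl] h L(3) a hc by auto
    also have "\<dots> = coset J h" using a hc by (simp add: A.m_assoc)
    finally show "a \<otimes>\<^bsub>A\<^esub> h \<otimes>\<^bsub>A\<^esub> inv\<^bsub>A\<^esub> a \<in> L" using memL[OF _ h] a hc by simp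
  qed
  moreover have "lam b ` L \<subseteq> L" if b: "b \<in> carrier A" for b
  proof
    fix z assume "z \<in> lam b ` L"
    then obtain x where x: "x \<in> L" "z = lam b x" by auto
    have xc: "x \<in> carrier A" using x Lc by auto
    have "b \<otimes>\<^bsub>M\<^esub> x \<otimes>\<^bsub>M\<^esub> inv\<^bsub>M\<^esub> b \<in> L"
      using L(1) x b carrier_M unfolding M.normal_inv_iff by auto
    then show "z \<in> L"
      using memL[OF lambda_closed[OF b xc] _ socle_preimage_conj(2)[OF ideal _ b, symmetric]]
        x L(3) by blast
  qed
  ultimately show ?thesis unfolding brace_ideal_def using sgA sgM L(1) by blast
qed

lemma socle_preimage_ideal: "brace_ideal A M J \<Longrightarrow> brace_ideal A M (socle_preimage J)"
  using normal_below_socle_preimage_ideal socle_preimage_normal ideal_subset_socle_preimage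
  by blast

lemma socle_preimage_mono:
  assumes ideal: "brace_ideal A M J" and bk: "brace_ideal A M K" and JK: "J \<subseteq> K"
  shows "socle_preimage J \<subseteq> socle_preimage K"
proof -
  have tr: "coset K x = coset K y" if "x \<in> carrier A" "y \<in> carrier A" "coset J x = coset J y" for x y
    using coset_eq_iff[OF ideal] coset_eq_iff[OF bk] that JK by blast
  show ?thesis
  proof
    fix x assume x: "x \<in> socle_preimage J"
    have xc: "x \<in> carrier A" using x socle_preimage_subset by auto
    show "x \<in> socle_preimage K"
      by (rule socle_preimageI[OF xc]; rule tr)
        (use socle_preimage_lambda[OF x] socle_preimage_commute[OF x] xc in auto)
  qed
qed


lemma carrier_quotient: "carrier (A Mod J) = coset J ` carrier A"
  unfolding coset_def carrier_FactGroup by simp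

lemma quotient_A_mult: "brace_ideal A M J \<Longrightarrow> x \<in> carrier A \<Longrightarrow> y \<in> carrier A \<Longrightarrow>
  coset J x \<otimes>\<^bsub>A Mod J\<^esub> coset J y = coset J (x \<otimes>\<^bsub>A\<^esub> y)"
  unfolding coset_def using normal.rcos_sum[OF ideal_normal_A] by simp

lemma quotient_M_mult: "brace_ideal A M J \<Longrightarrow> x \<in> carrier A \<Longrightarrow> y \<in> carrier A \<Longrightarrow>
  coset J x \<otimes>\<^bsub>M Mod J\<^esub> coset J y = coset J (x \<otimes>\<^bsub>M\<^esub> y)"
  unfolding coset_def using normal.rcos_sum[OF ideal_normal_M] ideal_rcos_M_eq_A carrier_M
  by (metis M_mult_closed mult_FactGroup)

lemma quotient_A_inv:
  assumes ideal: "brace_ideal A M J" and x: "x \<in> carrier A"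
  shows "inv\<^bsub>A Mod J\<^esub> coset J x = coset J (inv\<^bsub>A\<^esub> x)"
proof -
  have "coset J x \<in> carrier (A Mod J)" using x carrier_quotient by auto
  thus ?thesis unfolding coset_def using normal.inv_FactGroup[OF ideal_normal_A[OF ideal]]
      normal.rcos_inv[OF ideal_normal_A[OF ideal] x] by (simp add: coset_def)
qed

lemma quotient_lambda:
  assumes ideal: "brace_ideal A M J" and x: "x \<in> carrier A" and y: "y \<in> carrier A"
  shows "brace_lambda (A Mod J) (M Mod J) (coset J x) (coset J y) = coset J (lam x y)"
  unfolding brace_lambda_def
  using quotient_A_inv[OF ideal x] quotient_M_mult[OF ideal x y] quotient_A_mult[OF ideal] x y
  by (simp add: lambda_eq)

lemma coset_in_socle_iff:
  assumes ideal: "brace_ideal A M J" and x: "x \<in> carrier A"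
  shows "coset J x \<in> brace_socle (A Mod J) (M Mod J) \<longleftrightarrow> x \<in> socle_preimage J"
proof -
  have "coset J x \<in> brace_socle (A Mod J) (M Mod J) \<longleftrightarrow>
     (\<forall>y\<in>carrier A. brace_lambda (A Mod J) (M Mod J) (coset J x) (coset J y) = coset J y) \<and>
     (\<forall>y\<in>carrier A. coset J x \<otimes>\<^bsub>A Mod J\<^esub> coset J y = coset J y \<otimes>\<^bsub>A Mod J\<^esub> coset J x)"
    unfolding brace_socle_def group_center_def carrier_quotient using x by auto
  also have "\<dots> \<longleftrightarrow> x \<in> socle_preimage J"
    unfolding socle_preimage_def using quotient_lambda[OF ideal x] quotient_A_mult[OF ideal] x by auto
  finally show ?thesis .
qed

lemma Union_socle_quotient:
  assumes ideal: "brace_ideal A M J"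
  shows "\<Union> (brace_socle (A Mod J) (M Mod J)) = socle_preimage J"
proof
  show "\<Union> (brace_socle (A Mod J) (M Mod J)) \<subseteq> socle_preimage J"
  proof
    fix z assume "z \<in> \<Union> (brace_socle (A Mod J) (M Mod J))"
    then obtain Xs where Xs: "Xs \<in> brace_socle (A Mod J) (M Mod J)" "z \<in> Xs" by auto
    have "Xs \<in> carrier (A Mod J)" using Xs(1) unfolding brace_socle_def by auto
    then obtain x where x: "x \<in> carrier A" "Xs = coset J x" using carrier_quotient by auto
    have zc: "z \<in> carrier A" using Xs(2) x ideal_subset[OF ideal] unfolding coset_def r_coset_def by auto
    have "coset J z = coset J x" using A.repr_independence[of z J x] Xs(2) x ideal_subgroup_A[OF ideal]
      unfolding coset_def by simp
    hence "coset J z \<in> brace_socle (A Mod J) (M Mod J)" using Xs x by simp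
    thus "z \<in> socle_preimage J" using coset_in_socle_iff[OF ideal zc] by simp
  qed
next
  show "socle_preimage J \<subseteq> \<Union> (brace_socle (A Mod J) (M Mod J))"
  proof
    fix z assume z: "z \<in> socle_preimage J"
    have zc: "z \<in> carrier A" using z socle_preimage_subset by auto
    have "coset J z \<in> brace_socle (A Mod J) (M Mod J)" using coset_in_socle_iff[OF ideal zc] z by simp
    moreover have "z \<in> coset J z" unfolding coset_def using A.rcos_self[OF zc ideal_subgroup_A[OF ideal]] .
    ultimately show "z \<in> \<Union> (brace_socle (A Mod J) (M Mod J))" by blast
  qed
qed

lemma soc_series_Suc:
  "brace_ideal A M (soc_series A M k) \<Longrightarrow> soc_series A M (Suc k) = socle_preimage (soc_series A M k)"
  by (simp add: Union_socle_quotient)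

lemma soc_series_ideal: "brace_ideal A M (soc_series A M k)"
proof (induction k)
  case (Suc k)
  show ?case unfolding soc_series_Suc[OF Suc.IH] by (rule socle_preimage_ideal[OF Suc.IH])
qed (simp add: trivial_brace_ideal)

section \<open>Refining the socle series\<close>

lemma carrier_subquotient_A_M:
  assumes "brace_ideal A M J" "K \<subseteq> carrier A"
  shows "carrier (A\<lparr>carrier := K\<rparr> Mod J) = carrier (M\<lparr>carrier := K\<rparr> Mod J)"
  unfolding carrier_subquotient using ideal_rcos_M_eq_A[OF assms(1)] assms(2)
  by (auto simp: image_def)

text \<open>Inside \<open>socle_preimage J\<close> addition and multiplication agree modulo \<open>J\<close>
  (\<open>socle_preimage_coset_mult\<close>).\<close>

lemma subquotient_A_iso_M:
  assumes J: "brace_ideal A M J" and K: "brace_ideal A M K" "K \<subseteq> socle_preimage J"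
  shows "id \<in> iso (A\<lparr>carrier := K\<rparr> Mod J) (M\<lparr>carrier := K\<rparr> Mod J)"
  unfolding iso_def
proof (intro CollectI conjI homI)
  have Kc: "K \<subseteq> carrier A" using ideal_subset[OF K(1)] .
  fix E F
  assume "E \<in> carrier (A\<lparr>carrier := K\<rparr> Mod J)" "F \<in> carrier (A\<lparr>carrier := K\<rparr> Mod J)"
  then obtain x y where xy: "x \<in> K" "E = coset J x" "y \<in> K" "F = coset J y"
    unfolding carrier_subquotient coset_def by auto
  have xyc: "x \<in> carrier A" "y \<in> carrier A" using xy Kc by auto
  have "E \<otimes>\<^bsub>A\<lparr>carrier := K\<rparr> Mod J\<^esub> F = coset J (x \<otimes>\<^bsub>A\<^esub> y)"
    using quotient_A_mult[OF J xyc] xy by simp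
  also have "\<dots> = coset J (x \<otimes>\<^bsub>M\<^esub> y)"
    using socle_preimage_coset_mult[OF J _ xyc(2), of x] xy(1) K(2) by auto
  also have "\<dots> = E \<otimes>\<^bsub>M\<lparr>carrier := K\<rparr> Mod J\<^esub> F"
    using quotient_M_mult[OF J xyc] xy by simp
  finally show "id (E \<otimes>\<^bsub>A\<lparr>carrier := K\<rparr> Mod J\<^esub> F) =
      id E \<otimes>\<^bsub>M\<lparr>carrier := K\<rparr> Mod J\<^esub> id F"
    by simp
qed (use carrier_subquotient_A_M[OF J ideal_subset[OF K(1)]] in auto)

lemma socle_layer_step:
  assumes S: "brace_ideal A M S" and step: "prime_or_infinite_cyclic_step M U V"
    and bounds: "S \<subseteq> U" "V \<subseteq> socle_preimage S"
  shows "brace_supersoluble_step A M U V"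
proof -
  have U: "U \<lhd> M" "U \<subseteq> V" and V: "V \<lhd> M" and cyclic: "cyclic_group (M\<lparr>carrier := V\<rparr> Mod U)"
    using step unfolding prime_or_infinite_cyclic_step_def cyclic_normal_step_def by auto
  have idU: "brace_ideal A M U" and idV: "brace_ideal A M V"
    using normal_below_socle_preimage_ideal[OF S] U V bounds by blast+
  have V_socle: "V \<subseteq> socle_preimage U"
    using bounds(2) socle_preimage_mono[OF S idU bounds(1)] by blast
  have Vc: "V \<subseteq> carrier A" using ideal_subset[OF idV] .
  have "cyclic_group (A\<lparr>carrier := V\<rparr> Mod U)"
    using cyclic isomorphic_group_cyclicity[OF is_isoI[OF subquotient_A_iso_M[OF idU idV V_socle]]]
      A.subquotient_group[OF ideal_normal_A[OF idU] ideal_subgroup_A[OF idV] U(2)]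
      M.subquotient_group[OF U(1) ideal_subgroup_M[OF idV] U(2)] by blast
  moreover have "carrier (A\<lparr>carrier := V\<rparr> Mod U) \<subseteq> brace_socle (A Mod U) (M Mod U)"
    unfolding carrier_subquotient using coset_in_socle_iff[OF idU] V_socle Vc
    by (auto simp: coset_def)
  ultimately show ?thesis
    using step idU idV U(2) carrier_subquotient_A_M[OF idU Vc]
    unfolding brace_supersoluble_step_def prime_or_infinite_cyclic_step_def by auto
qed

lemma socle_layer_series:
  assumes S: "brace_ideal A M S" and M: "supersoluble_group M"
  shows "(brace_supersoluble_step A M)\<^sup>*\<^sup>* S (socle_preimage S)"
proof -
  have "(prime_or_infinite_cyclic_step M)\<^sup>*\<^sup>* S (socle_preimage S)"
    using M.supersoluble_group_normal_series_between[OF M ideal_normal_M[OF S]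
        socle_preimage_normal[OF S] ideal_subset_socle_preimage[OF S]] .
  then have "(\<lambda>U V. prime_or_infinite_cyclic_step M U V \<and> S \<subseteq> U \<and> V \<subseteq> socle_preimage S)\<^sup>*\<^sup>*
      S (socle_preimage S)"
    by (rule rtranclp_increasing_within[rotated])
      (simp add: prime_or_infinite_cyclic_step_def cyclic_normal_step_def)
  then show ?thesis
    by (rule rtranclp_mono[THEN predicate2D, rotated]) (auto intro: socle_layer_step[OF S])
qed

end

lemma brace_imp_skew_brace: "brace A M \<Longrightarrow> skew_brace A M"
  unfolding brace_def skew_brace_def skew_brace_axioms_def by auto

theorem theorem3p28:
  fixes A :: "('a, 'b) monoid_scheme" and M :: "('a, 'c) monoid_scheme"
  assumes "brace A M"
    and "\<exists>n. soc_series A M n = carrier A"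
    and "supersoluble_group M"
  shows "supersoluble_brace A M"
proof -
  interpret skew_brace A M using brace_imp_skew_brace[OF assms(1)] .
  obtain n where n: "soc_series A M n = carrier A" using assms(2) ..
  have "(brace_supersoluble_step A M)\<^sup>*\<^sup>* {\<one>\<^bsub>A\<^esub>} (soc_series A M k)" for k
  proof (induction k)
    case (Suc k)
    have "(brace_supersoluble_step A M)\<^sup>*\<^sup>* (soc_series A M k) (soc_series A M (Suc k))"
      unfolding soc_series_Suc[OF soc_series_ideal]
      by (rule socle_layer_series[OF soc_series_ideal assms(3)])
    with Suc.IH show ?case by (rule rtranclp_trans)
  qed simp
  then have "(brace_supersoluble_step A M)\<^sup>*\<^sup>* {\<one>\<^bsub>A\<^esub>} (carrier A)"
    using n by metis
  then show ?thesis by (rule supersoluble_braceI[OF trivial_brace_ideal])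
qed

end
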